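(* Let $G$ be a finite simple graph on the vertex set $\{1,\dots,n\}$ without cycles of length $3$. Then $E_3^{0,1}(G)=0$, $E_3^{0,2}(G)=0$ and $E_3^{1,1}(G)=0$.
   Context: Let $E$ be a complex elliptic curve, $x,y$ a basis of $H^1(E;\mathbb{Q})$ with $xy$ generating $H^2$. Let $E_2(n)$ be the quotient of the free graded-commutative algebra (for total degree) over $\mathbb{Q}$ on $x_i,y_i$ ($1\le i\le n$) of bidegree $(1,0)$ (pullbacks of $x,y$ along the $i$-th projection $E^n\to E$) and $\omega_{ij}=\omega_{ji}$ ($i\ne j$) of bidegree $(0,1)$ by the relations $(x_i-x_j)\omega_{ij}=0$, $(y_i-y_j)\omega_{ij}=0$, $\omega_{ij}\omega_{jk}+\omega_{jk}\omega_{ki}+\omega_{ki}\omega_{ij}=0$ (distinct $i,j,k$), with the derivation $d_2$ of bidegree $(2,-1)$, $d_2x_i=d_2y_i=0$, $d_2\omega_{ij}=(x_i-x_j)(y_i-y_j)$. For a graph $G$ with edge set $\mathcal{E}$, the graphic elliptic arrangement has complement $M(G)=\{P\in E^n\mid P_i\ne P_j \text{ for all } \{i,j\}\in\mathcal{E}\}$; the second page of the rational Leray spectral sequence of $M(G)\hookrightarrow E^n$ is $E_2(G)$, the sub-differential bigraded algebra of $E_2(n)$ generated by all $x_i,y_i$ and the $\omega_{ij}$ with $\{i,j\}\in\mathcal{E}$. $E_3^{p,q}(G)$ denotes the $d_2$-cohomology of $E_2(G)$ in bidegree $(p,q)$. *)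

theory Defs
  imports Complex_Main "HOL-Library.Nat_Bijection"
begin

text \<open>The free graded-commutative algebra over Q on generators of total degree 1
  (x_i, y_i, omega_ij) is the exterior algebra on these generators. We model it
  concretely: an element is a function from finite sets of generators (monomials,
  written in increasing order w.r.t. the injective encoding enc) to rationals.\<close>

datatype gen = X nat | Y nat | W nat nat  \<comment> \<open>W i j stands for omega_ij with i < j\<close>

fun enc :: "gen \<Rightarrow> nat" where
  "enc (X i) = 3 * i"
| "enc (Y i) = 3 * i + 1"
| "enc (W i j) = 3 * prod_encode (i, j) + 2"

fun is_W :: "gen \<Rightarrow> bool" where
  "is_W (W i j) = True"
| "is_W (X i) = False"
| "is_W (Y i) = False"

type_synonym ext = "gen set \<Rightarrow> rat"

definition zero_el :: ext where "zero_el = (\<lambda>_. 0)"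
definition mono :: "gen set \<Rightarrow> ext" where "mono S = (\<lambda>T. if T = S then 1 else 0)"
definition gen_el :: "gen \<Rightarrow> ext" where "gen_el g = mono {g}"
definition add :: "ext \<Rightarrow> ext \<Rightarrow> ext" where "add f g = (\<lambda>S. f S + g S)"
definition smul :: "rat \<Rightarrow> ext \<Rightarrow> ext" where "smul c f = (\<lambda>S. c * f S)"
definition sub :: "ext \<Rightarrow> ext \<Rightarrow> ext" where "sub f g = (\<lambda>S. f S - g S)"

definition inv_count :: "gen set \<Rightarrow> gen set \<Rightarrow> nat" where
  "inv_count A B = card {(a, b). a \<in> A \<and> b \<in> B \<and> enc b < enc a}"

definition mul :: "ext \<Rightarrow> ext \<Rightarrow> ext" where
  "mul f g = (\<lambda>S. \<Sum>p\<in>{(A, B). A \<union> B = S \<and> A \<inter> B = {}}.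
       (-1) ^ inv_count (fst p) (snd p) * f (fst p) * g (snd p))"

definition xg :: "nat \<Rightarrow> ext" where "xg i = gen_el (X i)"
definition yg :: "nat \<Rightarrow> ext" where "yg i = gen_el (Y i)"
definition om :: "nat \<Rightarrow> nat \<Rightarrow> ext" where "om i j = gen_el (W (min i j) (max i j))"

text \<open>The differential d_2 on generators, extended as a derivation of odd total degree.\<close>
definition dgen :: "gen \<Rightarrow> ext" where
  "dgen g = (case g of W i j \<Rightarrow> mul (sub (xg i) (xg j)) (sub (yg i) (yg j)) | _ \<Rightarrow> zero_el)"

definition dmono :: "gen set \<Rightarrow> ext" where
  "dmono S = (\<lambda>T. \<Sum>g\<in>S. (-1) ^ card {h \<in> S. enc h < enc g} * mul (dgen g) (mono (S - {g})) T)"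

definition d2 :: "ext \<Rightarrow> ext" where
  "d2 f = (\<lambda>T. \<Sum>S\<in>{S. f S \<noteq> 0}. f S * dmono S T)"

inductive_set subalg :: "gen set \<Rightarrow> ext set" for Gs :: "gen set" where
  one: "mono {} \<in> subalg Gs"
| gen: "g \<in> Gs \<Longrightarrow> gen_el g \<in> subalg Gs"
| add: "a \<in> subalg Gs \<Longrightarrow> b \<in> subalg Gs \<Longrightarrow> add a b \<in> subalg Gs"
| smul: "a \<in> subalg Gs \<Longrightarrow> smul c a \<in> subalg Gs"
| mul: "a \<in> subalg Gs \<Longrightarrow> b \<in> subalg Gs \<Longrightarrow> mul a b \<in> subalg Gs"

definition gens_all :: "nat \<Rightarrow> gen set" where
  "gens_all n = {X i | i. i \<in> {1..n}} \<union> {Y i | i. i \<in> {1..n}}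
     \<union> {W i j | i j. i < j \<and> i \<in> {1..n} \<and> j \<in> {1..n}}"

definition gens_G :: "nat \<Rightarrow> nat set set \<Rightarrow> gen set" where
  "gens_G n Edg = {X i | i. i \<in> {1..n}} \<union> {Y i | i. i \<in> {1..n}}
     \<union> {W i j | i j. i < j \<and> {i, j} \<in> Edg}"

definition relations :: "nat \<Rightarrow> ext set" where
  "relations n =
     {mul (sub (xg i) (xg j)) (om i j) | i j. i \<in> {1..n} \<and> j \<in> {1..n} \<and> i \<noteq> j}
   \<union> {mul (sub (yg i) (yg j)) (om i j) | i j. i \<in> {1..n} \<and> j \<in> {1..n} \<and> i \<noteq> j}
   \<union> {add (add (mul (om i j) (om j k)) (mul (om j k) (om k i))) (mul (om k i) (om i j))
        | i j k. i \<in> {1..n} \<and> j \<in> {1..n} \<and> k \<in> {1..n} \<and> i \<noteq> j \<and> j \<noteq> k \<and> k \<noteq> i}"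

inductive_set rel_ideal :: "nat \<Rightarrow> ext set" for n :: nat where
  zero: "zero_el \<in> rel_ideal n"
| rel: "r \<in> relations n \<Longrightarrow> r \<in> rel_ideal n"
| add: "a \<in> rel_ideal n \<Longrightarrow> b \<in> rel_ideal n \<Longrightarrow> add a b \<in> rel_ideal n"
| smul: "a \<in> rel_ideal n \<Longrightarrow> smul c a \<in> rel_ideal n"
| lmul: "a \<in> subalg (gens_all n) \<Longrightarrow> r \<in> rel_ideal n \<Longrightarrow> mul a r \<in> rel_ideal n"
| rmul: "a \<in> subalg (gens_all n) \<Longrightarrow> r \<in> rel_ideal n \<Longrightarrow> mul r a \<in> rel_ideal n"

definition homog :: "int \<Rightarrow> int \<Rightarrow> ext \<Rightarrow> bool" where
  "homog p q f = (\<forall>S. f S \<noteq> 0 \<longrightarrow> finite S \<and> int (card {g \<in> S. \<not> is_W g}) = p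
                                          \<and> int (card {g \<in> S. is_W g}) = q)"

text \<open>E_3^{p,q}(G) = 0: every d_2-cocycle of E_2(G) (= image of subalg (gens_G) in the
  quotient by rel_ideal) of bidegree (p,q) is a d_2-coboundary of an element of E_2(G)
  of bidegree (p-2,q+1).\<close>
definition E3_vanishes :: "nat \<Rightarrow> nat set set \<Rightarrow> int \<Rightarrow> int \<Rightarrow> bool" where
  "E3_vanishes n Edg p q =
     (\<forall>a. a \<in> subalg (gens_G n Edg) \<and> homog p q a \<and> d2 a \<in> rel_ideal n \<longrightarrow>
        (\<exists>b. b \<in> subalg (gens_G n Edg) \<and> homog (p - 2) (q + 1) b
             \<and> sub a (d2 b) \<in> rel_ideal n))"

end

theory Submission
  imports Defs
begin

(* In the three bidegrees a preimage b under d_2 would have negative x/y-degree, so it suffices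
   to show that every d_2-cocycle a of E_2(G) there already lies in the relation ideal (then
   b = 0 works).  Every monomial in the support of an element of the ideal contains some omega,
   and if it contains exactly one, omega_ij, it also contains an x or y indexed by i or j; call
   such monomials linked.  Hence the coefficient of an unlinked test monomial T in d_2 a, a
   signed sum of the coefficients of a at the monomials S whose differential reaches T, is
   zero.  Test monomials with only one or two such S determine the coefficients of a: in
   bidegrees (0,1) and (0,2) they all vanish, and in bidegree (1,1) the coefficients of
   x_k omega_ij and y_k omega_ij vanish unless k is i or j, and are antisymmetric in i, j, so
   a is a combination of the relations (x_i - x_j) omega_ij and (y_i - y_j) omega_ij.  The
   absence of triangles is what keeps the number of contributing S small when edges share a
   vertex. *)

lemma sum_if_unique:
  assumes "finite I" "\<And>x y. x \<in> I \<Longrightarrow> y \<in> I \<Longrightarrow> P x \<Longrightarrow> P y \<Longrightarrow> x = y"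
    and "c \<noteq> 0 \<Longrightarrow> \<exists>x\<in>I. P x"
  shows "(\<Sum>x\<in>I. if P x then c else 0) = c"
proof (cases "\<exists>x\<in>I. P x")
  case True
  then obtain x where x: "x \<in> I" "P x" by blast
  have "(\<Sum>y\<in>I. if P y then c else 0) = (\<Sum>y\<in>{x}. if P y then c else 0)"
    using assms(1,2) x by (intro sum.mono_neutral_right) auto
  then show ?thesis using x(2) by simp
qed (use assms(3) in auto)

lemma doubleton_eq_if_mem: "x \<in> {c, d} \<Longrightarrow> y \<in> {c, d} \<Longrightarrow> x \<noteq> y \<Longrightarrow> {c, d} = {x, y}"
  by auto

lemma adjacent_pairs:
  fixes i j k l :: nat
  assumes "i < j" "k < l" "(i, j) \<noteq> (k, l)" "{i, j} \<inter> {k, l} \<noteq> {}"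
  obtains m e w where "{i, j} = {m, e}" "{k, l} = {e, w}" "m \<notin> {k, l}"
proof -
  have "\<not> {i, j} \<subseteq> {k, l}"
  proof
    assume "{i, j} \<subseteq> {k, l}"
    then have "i = k" "j = l" using assms(1,2) by auto
    then show False using assms(3) by simp
  qed
  then obtain m where m: "m \<in> {i, j}" "m \<notin> {k, l}" by blast
  obtain e where e: "e \<in> {i, j}" "e \<in> {k, l}" using assms(4) by blast
  obtain w where "{k, l} = {e, w}" using e(2) by (metis insert_commute insertE singletonD)
  moreover have "{i, j} = {m, e}" using m e assms(1) by auto
  ultimately show ?thesis using that m(2) by blast
qed

section \<open>Monomial products and the differential\<close>

lemma mul_nonzero_split:
  assumes "mul f g S \<noteq> 0"
  obtains A B where "A \<union> B = S" "A \<inter> B = {}" "f A \<noteq> 0" "g B \<noteq> 0"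
proof -
  obtain p where "p \<in> {(A, B). A \<union> B = S \<and> A \<inter> B = {}}"
      "(-1) ^ inv_count (fst p) (snd p) * f (fst p) * g (snd p) \<noteq> (0::rat)"
    using assms unfolding mul_def by (meson sum.not_neutral_contains_not_neutral)
  then show ?thesis using that by (cases p) auto
qed

lemma mul_infinite:
  assumes "infinite T"
  shows "mul f g T = 0"
proof -
  let ?I = "{(A, B). A \<union> B = T \<and> A \<inter> B = {}}"
  have "Pow T \<subseteq> fst ` ?I"
  proof
    fix A assume "A \<in> Pow T"
    then have "(A, T - A) \<in> ?I" by auto
    then show "A \<in> fst ` ?I" by (rule rev_image_eqI) simp
  qed
  then have "infinite ?I"
    using assms by (meson finite_Pow_iff finite_imageI finite_subset)
  then show ?thesis unfolding mul_def by simp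
qed

lemma mul_mono_right:
  assumes "finite T"
  shows "mul f (mono B) T = (if B \<subseteq> T then (-1) ^ inv_count (T - B) B * f (T - B) else 0)"
proof -
  let ?I = "{(U, V). U \<union> V = T \<and> U \<inter> V = {}}"
  have "finite ?I"
    by (rule finite_subset[of _ "Pow T \<times> Pow T"]) (auto simp: assms)
  then have "mul f (mono B) T =
      (\<Sum>p\<in>?I \<inter> {(T - B, B)}. (-1) ^ inv_count (fst p) (snd p) * f (fst p) * mono B (snd p))"
    unfolding mul_def by (intro sum.mono_neutral_right) (auto simp: mono_def)
  also have "\<dots> = (if B \<subseteq> T then (-1) ^ inv_count (T - B) B * f (T - B) else 0)"
  proof (cases "B \<subseteq> T")
    case True
    then have "?I \<inter> {(T - B, B)} = {(T - B, B)}" by auto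
    then show ?thesis using True by (simp add: mono_def)
  next
    case False
    then have "?I \<inter> {(T - B, B)} = {}" by auto
    then show ?thesis using False by simp
  qed
  finally show ?thesis .
qed

lemma mul_sub_right: "mul f (sub g h) = sub (mul f g) (mul f h)"
  unfolding mul_def sub_def by (rule ext) (simp add: sum_subtractf[symmetric] algebra_simps)

lemma mul_sub_left: "mul (sub f g) h = sub (mul f h) (mul g h)"
  unfolding mul_def sub_def by (rule ext) (simp add: sum_subtractf[symmetric] algebra_simps)

lemma inv_count_singleton_right: "inv_count A {b} = card {a \<in> A. enc b < enc a}"
proof -
  have "{(a, b'). a \<in> A \<and> b' \<in> {b} \<and> enc b' < enc a} = (\<lambda>a. (a, b)) ` {a \<in> A. enc b < enc a}"
    by auto
  then show ?thesis unfolding inv_count_def by (simp add: card_image inj_on_def)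
qed

lemma mul_gen_el_mono_singleton:
  assumes "enc g < enc w"
  shows "mul (gen_el g) (mono {w}) = mono {g, w}"
proof
  fix T
  show "mul (gen_el g) (mono {w}) T = mono {g, w} T"
  proof (cases "finite T")
    case True
    have "g \<noteq> w" "inv_count {g} {w} = 0"
      using assms by (auto simp: inv_count_singleton_right)
    then have "T = {g, w} \<longleftrightarrow> {w} \<subseteq> T \<and> T - {w} = {g}" by auto
    then show ?thesis
      unfolding mul_mono_right[OF True] using \<open>inv_count {g} {w} = 0\<close>
      by (auto simp: gen_el_def mono_def)
  qed (auto simp: mul_infinite mono_def)
qed

lemma dgen_nonW: "\<not> is_W g \<Longrightarrow> dgen g = zero_el"
  by (cases g) (auto simp: dgen_def)

lemma sub_xg_apply: "sub (xg i) (xg j) U = (if U = {X i} then 1 else 0) - (if U = {X j} then 1 else 0)"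
  by (simp add: sub_def xg_def gen_el_def mono_def)

lemma dgen_W_apply:
  "dgen (W i j) U = mul (sub (xg i) (xg j)) (mono {Y i}) U - mul (sub (xg i) (xg j)) (mono {Y j}) U"
  unfolding dgen_def yg_def gen_el_def mul_sub_right by (simp add: sub_def)

lemma dgen_W_nonzero:
  assumes "finite U" "dgen (W i j) U \<noteq> 0"
  obtains p q where "U = {X p, Y q}" "p \<in> {i, j}" "q \<in> {i, j}"
proof -
  have "mul (sub (xg i) (xg j)) (mono {Y i}) U \<noteq> 0 \<or> mul (sub (xg i) (xg j)) (mono {Y j}) U \<noteq> 0"
    using assms(2) dgen_W_apply by fastforce
  then show ?thesis
    using that unfolding mul_mono_right[OF assms(1)] sub_xg_apply by (auto split: if_splits)
qed

lemma dgen_W_XY: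
  "dgen (W i j) {X p, Y q} = (-1) ^ (if q < p then 1 else 0) *
     ((if p = i then 1 else 0) - (if p = j then 1 else 0)) * ((if q = i then 1 else 0) - (if q = j then 1 else 0))"
proof -
  have fin: "finite {X p, Y q}" by simp
  have "{X p, Y q} - {Y q} = {X p}" by auto
  moreover have "inv_count {X p} {Y q} = (if q < p then 1 else 0)"
    by (simp add: inv_count_singleton_right Collect_conj_eq)
  ultimately show ?thesis
    unfolding dgen_W_apply mul_mono_right[OF fin] by (auto simp: sub_xg_apply)
qed

lemma dgen_W_XY_nonzero: "i \<noteq> j \<Longrightarrow> p \<in> {i, j} \<Longrightarrow> q \<in> {i, j} \<Longrightarrow> dgen (W i j) {X p, Y q} \<noteq> 0"
  by (auto simp: dgen_W_XY)

lemma dmono_apply: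
  assumes "finite T"
  shows "dmono S T = (\<Sum>g\<in>S. (-1) ^ card {h \<in> S. enc h < enc g} *
     (if S - {g} \<subseteq> T then (-1) ^ inv_count (T - (S - {g})) (S - {g}) * dgen g (T - (S - {g})) else 0))"
  unfolding dmono_def by (simp add: mul_mono_right[OF assms])

lemma dmono_nonzero:
  assumes "finite T" "dmono S T \<noteq> 0"
  obtains i j p q where "W i j \<in> S" "S - {W i j} \<subseteq> T" "T - (S - {W i j}) = {X p, Y q}"
    "p \<in> {i, j}" "q \<in> {i, j}"
proof -
  obtain g where "g \<in> S" "(-1) ^ card {h \<in> S. enc h < enc g} *
     (if S - {g} \<subseteq> T then (-1) ^ inv_count (T - (S - {g})) (S - {g}) * dgen g (T - (S - {g})) else 0) \<noteq> (0::rat)"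
    using assms dmono_apply by (metis (no_types, lifting) sum.not_neutral_contains_not_neutral)
  then have g: "g \<in> S" "S - {g} \<subseteq> T" "dgen g (T - (S - {g})) \<noteq> 0"
    by (auto split: if_splits)
  then have "is_W g"
    using dgen_nonW by (force simp: zero_el_def)
  then obtain i j where ij: "g = W i j"
    by (cases g) auto
  obtain p q where "T - (S - {g}) = {X p, Y q}" "p \<in> {i, j}" "q \<in> {i, j}"
    using dgen_W_nonzero[of "T - (S - {g})" i j] g(3) assms(1) unfolding ij by blast
  then show ?thesis
    using that g(1,2) unfolding ij by blast
qed

lemma dmono_insert_W:
  assumes "finite T" "W i j \<notin> T" "B \<subseteq> T"
  shows "dmono (insert (W i j) B) T =
    (-1) ^ (card {h \<in> insert (W i j) B. enc h < enc (W i j)} + inv_count (T - B) B) * dgen (W i j) (T - B)"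
proof -
  let ?S = "insert (W i j) B"
  have "W i j \<notin> B" "finite B" using assms finite_subset by auto
  moreover have "\<not> ?S - {g} \<subseteq> T" if "g \<in> B" for g
    using that assms(2) \<open>W i j \<notin> B\<close> by auto
  ultimately show ?thesis
    using assms(3) by (simp add: dmono_apply[OF assms(1)] power_add)
qed

lemma dmono_pair_W_nonzero_iff:
  assumes "finite T" "W i j \<notin> T" "h \<in> T"
  shows "dmono {h, W i j} T \<noteq> 0 \<longleftrightarrow> dgen (W i j) (T - {h}) \<noteq> 0"
  using dmono_insert_W[of T i j "{h}"] assms by (simp add: insert_commute)
section \<open>The relation ideal\<close>

definition linked :: "gen set \<Rightarrow> bool" where
  "linked S \<longleftrightarrow> (\<exists>g\<in>S. is_W g) \<and>
     (\<forall>i j. {g \<in> S. is_W g} = {W i j} \<longrightarrow> X i \<in> S \<or> X j \<in> S \<or> Y i \<in> S \<or> Y j \<in> S)"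

lemma linked_mono:
  assumes "linked B" "B \<subseteq> S"
  shows "linked S"
  unfolding linked_def
proof (intro conjI allI impI)
  obtain g where g: "g \<in> B" "is_W g" using assms(1) by (auto simp: linked_def)
  then show "\<exists>g\<in>S. is_W g" using assms(2) by auto
  fix i j
  assume "{g \<in> S. is_W g} = {W i j}"
  then have "{g \<in> B. is_W g} \<subseteq> {W i j}" using assms(2) by auto
  then have "{g \<in> B. is_W g} = {W i j}" using g by auto
  then have "X i \<in> B \<or> X j \<in> B \<or> Y i \<in> B \<or> Y j \<in> B" using assms(1) by (simp add: linked_def)
  then show "X i \<in> S \<or> X j \<in> S \<or> Y i \<in> S \<or> Y j \<in> S" using assms(2) by auto
qed

lemma linked_mul_om:
  assumes "\<And>A. f A \<noteq> 0 \<Longrightarrow> (\<exists>g\<in>A. is_W g) \<or> X i \<in> A \<or> X j \<in> A \<or> Y i \<in> A \<or> Y j \<in> A"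
    and "mul f (om i j) S \<noteq> 0"
  shows "linked S"
  unfolding linked_def
proof (intro conjI allI impI)
  obtain A B where AB: "A \<union> B = S" "A \<inter> B = {}" "f A \<noteq> 0" "om i j B \<noteq> 0"
    using mul_nonzero_split[OF assms(2)] .
  have B: "B = {W (min i j) (max i j)}"
    using AB(4) by (auto simp: om_def gen_el_def mono_def split: if_splits)
  then show "\<exists>g\<in>S. is_W g" using AB(1) by auto
  fix k l
  assume S_W: "{g \<in> S. is_W g} = {W k l}"
  have "W (min i j) (max i j) \<in> {g \<in> S. is_W g}" using AB(1) B by auto
  then have "k = min i j" "l = max i j" using S_W by auto
  then have kl: "k = i \<and> l = j \<or> k = j \<and> l = i" by linarith
  have "\<not> is_W g" if "g \<in> A" for g
  proof
    assume "is_W g"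
    then have "g \<in> {g \<in> S. is_W g}" using that AB(1) by blast
    then have "g = W (min i j) (max i j)" using S_W \<open>k = min i j\<close> \<open>l = max i j\<close> by simp
    then show False using that AB(2) B by blast
  qed
  then have "X i \<in> A \<or> X j \<in> A \<or> Y i \<in> A \<or> Y j \<in> A" using assms(1)[OF AB(3)] by blast
  then show "X k \<in> S \<or> X l \<in> S \<or> Y k \<in> S \<or> Y l \<in> S" using kl AB(1) by blast
qed

lemma relations_linked:
  assumes "r \<in> relations n" "r S \<noteq> 0"
  shows "linked S"
proof -
  have om_linked: "linked S" if "mul (om i j) (om k l) S \<noteq> 0" for i j k l S
    using that by (rule linked_mul_om[rotated]) (auto simp: om_def gen_el_def mono_def split: if_splits)
  have xg_linked: "linked S" if "mul (sub (xg i) (xg j)) (om i j) S \<noteq> 0" for i j S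
    using that by (rule linked_mul_om[rotated]) (auto simp: sub_xg_apply split: if_splits)
  have yg_linked: "linked S" if "mul (sub (yg i) (yg j)) (om i j) S \<noteq> 0" for i j S
    using that by (rule linked_mul_om[rotated])
      (auto simp: sub_def yg_def gen_el_def mono_def split: if_splits)
  show ?thesis
    using assms unfolding relations_def
  proof (elim UnE CollectE exE conjE)
    fix i j k
    assume "r = add (add (mul (om i j) (om j k)) (mul (om j k) (om k i))) (mul (om k i) (om i j))"
    then have "mul (om i j) (om j k) S \<noteq> 0 \<or> mul (om j k) (om k i) S \<noteq> 0 \<or> mul (om k i) (om i j) S \<noteq> 0"
      using assms(2) by (auto simp: add_def)
    then show ?thesis using om_linked by blast
  qed (use xg_linked yg_linked in blast)+
qed

(* The relations are supported on linked monomials, and supersets of linked monomials are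
   linked, so the property survives multiplication. *)

lemma rel_ideal_linked:
  assumes "r \<in> rel_ideal n" "r S \<noteq> 0"
  shows "linked S"
  using assms
proof (induction arbitrary: S rule: rel_ideal.induct)
  case zero
  then show ?case by (simp add: zero_el_def)
next
  case (rel r)
  then show ?case by (rule relations_linked)
next
  case (add a b)
  then show ?case by (cases "a S = 0") (auto simp: add_def)
next
  case (smul a c)
  then show ?case by (simp add: smul_def)
next
  case (lmul a r)
  then show ?case by (auto elim!: mul_nonzero_split intro: linked_mono)
next
  case (rmul a r)
  then show ?case by (auto elim!: mul_nonzero_split intro: linked_mono)
qed

lemma not_linked_single_W:
  assumes "{g \<in> T. is_W g} = {W k l}" "X k \<notin> T" "X l \<notin> T" "Y k \<notin> T" "Y l \<notin> T"
  shows "\<not> linked T"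
  using assms unfolding linked_def by blast

lemma rel_ideal_sum:
  assumes "finite I" "\<And>x. x \<in> I \<Longrightarrow> f x \<in> rel_ideal n"
  shows "(\<lambda>T. \<Sum>x\<in>I. f x T) \<in> rel_ideal n"
  using assms
proof (induction I rule: finite_induct)
  case empty
  then show ?case using rel_ideal.zero by (simp add: zero_el_def)
next
  case (insert x I)
  then have "add (f x) (\<lambda>T. \<Sum>y\<in>I. f y T) \<in> rel_ideal n" by (intro rel_ideal.add) auto
  then show ?case using insert(1,2) by (simp add: add_def)
qed
section \<open>Cocycles of low bidegree\<close>

lemma subalg_support:
  assumes "f \<in> subalg Gs"
  shows "finite {S. f S \<noteq> 0} \<and> (\<forall>S. f S \<noteq> 0 \<longrightarrow> finite S \<and> S \<subseteq> Gs)"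
  using assms
proof (induction rule: subalg.induct)
  case one
  then show ?case by (simp add: mono_def)
next
  case (gen g)
  then show ?case by (simp add: gen_el_def mono_def)
next
  case (add a b)
  have "{S. add a b S \<noteq> 0} \<subseteq> {S. a S \<noteq> 0} \<union> {S. b S \<noteq> 0}" by (auto simp: add_def)
  then show ?case using add.IH by (auto simp: add_def intro: finite_subset)
next
  case (smul a c)
  have "{S. smul c a S \<noteq> 0} \<subseteq> {S. a S \<noteq> 0}" by (auto simp: smul_def)
  then show ?case using smul.IH by (auto simp: smul_def intro: finite_subset)
next
  case (mul a b)
  have "{S. mul a b S \<noteq> 0} \<subseteq> (\<lambda>(A, B). A \<union> B) ` ({S. a S \<noteq> 0} \<times> {S. b S \<noteq> 0})"
    by (auto elim!: mul_nonzero_split)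
  moreover have "finite ((\<lambda>(A, B). A \<union> B) ` ({S. a S \<noteq> 0} \<times> {S. b S \<noteq> 0}))"
    using mul.IH by auto
  moreover have "finite S \<and> S \<subseteq> Gs" if "mul a b S \<noteq> 0" for S
    using that mul.IH by (auto elim!: mul_nonzero_split)
  ultimately show ?case by (blast intro: finite_subset)
qed

lemma E3_vanishesI:
  assumes "\<And>a. a \<in> subalg (gens_G n Edg) \<Longrightarrow> homog p q a \<Longrightarrow> d2 a \<in> rel_ideal n \<Longrightarrow> a \<in> rel_ideal n"
  shows "E3_vanishes n Edg p q"
  unfolding E3_vanishes_def
proof (intro allI impI)
  fix a
  assume "a \<in> subalg (gens_G n Edg) \<and> homog p q a \<and> d2 a \<in> rel_ideal n"
  then have "sub a (d2 zero_el) \<in> rel_ideal n"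
    using assms by (simp add: d2_def sub_def zero_el_def)
  moreover have "zero_el \<in> subalg (gens_G n Edg)"
    using subalg.smul[OF subalg.one, where c = 0] by (simp add: smul_def zero_el_def)
  moreover have "homog (p - 2) (q + 1) zero_el"
    by (simp add: homog_def zero_el_def)
  ultimately show "\<exists>b. b \<in> subalg (gens_G n Edg) \<and> homog (p - 2) (q + 1) b \<and> sub a (d2 b) \<in> rel_ideal n"
    by blast
qed

locale E2_cocycle =
  fixes n :: nat and Edg :: "nat set set" and p q :: int and a :: ext
  assumes in_E2: "a \<in> subalg (gens_G n Edg)"
    and homogeneous: "homog p q a"
    and cocycle: "d2 a \<in> rel_ideal n"
begin

lemma finite_support: "finite {S. a S \<noteq> 0}"
  using subalg_support[OF in_E2] by blast

lemma support_bidegree: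
  assumes "a S \<noteq> 0"
  shows "finite S" "int (card {g \<in> S. \<not> is_W g}) = p" "int (card {g \<in> S. is_W g}) = q"
  using homogeneous assms unfolding homog_def by blast+

lemma support_W:
  assumes "a S \<noteq> 0" "g \<in> S" "is_W g"
  obtains i j where "g = W i j" "i < j" "{i, j} \<in> Edg"
proof -
  have "g \<in> gens_G n Edg" using subalg_support[OF in_E2] assms(1,2) by blast
  then show ?thesis using assms(3) that by (cases g) (auto simp: gens_G_def)
qed

lemma d2_eq_sum:
  assumes "finite C" "\<And>S. a S \<noteq> 0 \<Longrightarrow> dmono S T \<noteq> 0 \<Longrightarrow> S \<in> C"
  shows "d2 a T = (\<Sum>S\<in>C. a S * dmono S T)"
proof -
  have "d2 a T = (\<Sum>S\<in>{S. a S \<noteq> 0} \<union> C. a S * dmono S T)"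
    unfolding d2_def using finite_support assms(1) by (intro sum.mono_neutral_left) auto
  also have "\<dots> = (\<Sum>S\<in>C. a S * dmono S T)"
    using finite_support assms by (intro sum.mono_neutral_right) auto
  finally show ?thesis .
qed

lemma d2_unlinked: "\<not> linked T \<Longrightarrow> d2 a T = 0"
  using rel_ideal_linked[OF cocycle] by blast

lemma sole_contributor_vanishes:
  assumes "\<not> linked T" "dmono S0 T \<noteq> 0"
    and "\<And>S. a S \<noteq> 0 \<Longrightarrow> dmono S T \<noteq> 0 \<Longrightarrow> S = S0"
  shows "a S0 = 0"
proof -
  have "a S0 * dmono S0 T = d2 a T" using d2_eq_sum[of "{S0}" T] assms(3) by simp
  then show ?thesis using d2_unlinked[OF assms(1)] assms(2) by simp
qed

end

locale cocycle_01 = E2_cocycle n Edg 0 1 a for n Edg a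
begin

lemma support_shape:
  assumes "a S \<noteq> 0"
  obtains i j where "S = {W i j}" "i < j"
proof -
  have "finite S" "card {g \<in> S. \<not> is_W g} = 0" "card {g \<in> S. is_W g} = 1"
    using support_bidegree[OF assms] by simp_all
  then obtain w where no_XY: "{g \<in> S. \<not> is_W g} = {}" and W: "{g \<in> S. is_W g} = {w}"
    by (auto simp: card_1_singleton_iff)
  have "S = {g \<in> S. \<not> is_W g} \<union> {g \<in> S. is_W g}" by blast
  then have "S = {w}" unfolding no_XY W by simp
  moreover obtain i j where "w = W i j" "i < j"
    using support_W[OF assms, of w] W by blast
  ultimately show ?thesis using that by blast
qed

theorem vanishes: "a = zero_el"
proof -
  have "a S0 = 0" for S0
  proof (rule ccontr)
    assume "a S0 \<noteq> 0"
    then obtain i j where S0: "S0 = {W i j}" "i < j" by (rule support_shape)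
    let ?T = "{X i, Y j}"
    have "a {W i j} = 0"
    proof (rule sole_contributor_vanishes[where T = ?T])
      show "\<not> linked ?T" by (simp add: linked_def)
      show "dmono {W i j} ?T \<noteq> 0"
        using dmono_insert_W[of ?T i j "{}"] dgen_W_XY_nonzero[of i j i j] S0(2) by simp
      fix S
      assume "a S \<noteq> 0" "dmono S ?T \<noteq> 0"
      moreover obtain k l where S: "S = {W k l}" "k < l"
        using support_shape[OF \<open>a S \<noteq> 0\<close>] by blast
      ultimately obtain c d p q where "W c d \<in> S" "?T = {X p, Y q}" "p \<in> {c, d}" "q \<in> {c, d}"
        using dmono_nonzero[of ?T S] by (auto simp: S)
      then have "i \<in> {k, l}" "j \<in> {k, l}" using S by (auto simp: doubleton_eq_iff)
      then show "S = {W i j}" using S S0(2) by auto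
    qed
    with S0 \<open>a S0 \<noteq> 0\<close> show False by simp
  qed
  then show ?thesis by (auto simp: zero_el_def)
qed

end

locale triangle_free =
  fixes Edg :: "nat set set"
  assumes no_triangle: "\<not> ({i, j} \<in> Edg \<and> {j, k} \<in> Edg \<and> {k, i} \<in> Edg)"

lemma (in triangle_free) nonadjacent_end:
  assumes "{i, j} \<in> Edg"
  obtains u v where "{i, j} = {u, v}" "{k, u} \<notin> Edg"
proof (cases "{k, i} \<in> Edg")
  case True
  then have "{k, j} \<notin> Edg" using no_triangle[of i j k] assms by (auto simp: insert_commute)
  then show ?thesis using that[of j i] by (simp add: insert_commute)
next
  case False
  then show ?thesis using that[of i j] by simp
qed

locale cocycle_02 = E2_cocycle n Edg 0 2 a + triangle_free Edg for n Edg a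
begin

lemma support_shape:
  assumes "a S \<noteq> 0"
  obtains i j k l where "S = {W i j, W k l}" "W i j \<noteq> W k l"
    "i < j" "k < l" "{i, j} \<in> Edg" "{k, l} \<in> Edg"
proof -
  have "finite S" "card {g \<in> S. \<not> is_W g} = 0" "card {g \<in> S. is_W g} = 2"
    using support_bidegree[OF assms] by simp_all
  then obtain u v where no_XY: "{g \<in> S. \<not> is_W g} = {}" and W: "{g \<in> S. is_W g} = {u, v}" "u \<noteq> v"
    by (auto simp: card_2_iff)
  have "S = {g \<in> S. \<not> is_W g} \<union> {g \<in> S. is_W g}" by blast
  then have "S = {u, v}" unfolding no_XY W by simp
  moreover obtain i j where "u = W i j" "i < j" "{i, j} \<in> Edg"
    using support_W[OF assms, of u] W by blast
  moreover obtain k l where "v = W k l" "k < l" "{k, l} \<in> Edg"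
    using support_W[OF assms, of v] W by blast
  ultimately show ?thesis using that W(2) by blast
qed

lemma contributor_shape:
  assumes "a S \<noteq> 0" "finite T" "{g \<in> T. is_W g} = {W k l}" "dmono S T \<noteq> 0"
  obtains i j p q where "S = {W i j, W k l}" "W i j \<noteq> W k l" "i < j" "{i, j} \<in> Edg"
    "T - {W k l} = {X p, Y q}" "p \<in> {i, j}" "q \<in> {i, j}"
proof -
  obtain i j p q where ij: "W i j \<in> S" "S - {W i j} \<subseteq> T" "T - (S - {W i j}) = {X p, Y q}"
      "p \<in> {i, j}" "q \<in> {i, j}"
    by (rule dmono_nonzero[OF assms(2,4)])
  obtain i' j' k' l' where S: "S = {W i' j', W k' l'}" "W i' j' \<noteq> W k' l'"
    "i' < j'" "k' < l'" "{i', j'} \<in> Edg" "{k', l'} \<in> Edg"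
    by (rule support_shape[OF assms(1)])
  have "\<forall>g\<in>S. is_W g" using S(1) by simp
  then have "S - {W i j} \<subseteq> {g \<in> T. is_W g}" using ij(2) by blast
  moreover have "S - {W i j} \<noteq> {}" using ij(1) S(1,2) by blast
  ultimately have rest: "S - {W i j} = {W k l}" unfolding assms(3) by (metis subset_singletonD)
  then have "S = {W i j, W k l}" "W i j \<noteq> W k l" using ij(1) by auto
  moreover obtain "i < j" "{i, j} \<in> Edg" using support_W[OF assms(1) ij(1)] by auto
  ultimately show ?thesis using that ij(3-5) unfolding rest by blast
qed

lemma coeff_disjoint_edges:
  assumes "i < j" "k < l" "{i, j} \<inter> {k, l} = {}"
  shows "a {W i j, W k l} = 0"
proof -
  let ?T = "{W k l, X i, Y j}"
  have T_W: "{g \<in> ?T. is_W g} = {W k l}" by auto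
  have T_rest: "?T - {W k l} = {X i, Y j}" by auto
  show ?thesis
  proof (rule sole_contributor_vanishes[where T = ?T])
    show "\<not> linked ?T" using assms(3) by (intro not_linked_single_W[OF T_W]) auto
    have "W i j \<notin> ?T" using assms(3) by auto
    then show "dmono {W i j, W k l} ?T \<noteq> 0"
      using dmono_insert_W[of ?T i j "{W k l}"] dgen_W_XY_nonzero[of i j i j] assms(1)
      unfolding T_rest by simp
    fix S
    assume aS: "a S \<noteq> 0" and dS: "dmono S ?T \<noteq> 0"
    obtain i' j' p q where S: "S = {W i' j', W k l}" "W i' j' \<noteq> W k l" "i' < j'" "{i', j'} \<in> Edg"
        "?T - {W k l} = {X p, Y q}" "p \<in> {i', j'}" "q \<in> {i', j'}"
      by (rule contributor_shape[OF aS _ T_W dS]) simp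
    then have "i \<in> {i', j'}" "j \<in> {i', j'}" unfolding T_rest by (auto simp: doubleton_eq_iff)
    then show "S = {W i j, W k l}" using S(1,3) assms(1) by auto
  qed
qed

lemma coeff_adjacent_edges:
  assumes "i < j" "k < l" "{i, j} \<in> Edg" "{k, l} \<in> Edg" "W i j \<noteq> W k l" "{i, j} \<inter> {k, l} \<noteq> {}"
  shows "a {W i j, W k l} = 0"
proof -
  obtain m e w where me: "{i, j} = {m, e}" and w: "{k, l} = {e, w}" and m: "m \<notin> {k, l}"
    using adjacent_pairs[OF assms(1,2) _ assms(6)] assms(5) by auto
  let ?T = "{W k l, X m, Y m}"
  have T_W: "{g \<in> ?T. is_W g} = {W k l}" by auto
  have T_rest: "?T - {W k l} = {X m, Y m}" by auto
  show ?thesis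
  proof (rule sole_contributor_vanishes[where T = ?T])
    show "\<not> linked ?T" using m by (intro not_linked_single_W[OF T_W]) auto
    have "W i j \<notin> ?T" using assms(5) by auto
    moreover have "m \<in> {i, j}" using me by simp
    ultimately show "dmono {W i j, W k l} ?T \<noteq> 0"
      using dmono_insert_W[of ?T i j "{W k l}"] dgen_W_XY_nonzero[of i j m m] assms(1)
      unfolding T_rest by simp
    fix S
    assume aS: "a S \<noteq> 0" and dS: "dmono S ?T \<noteq> 0"
    obtain i' j' p q where S: "S = {W i' j', W k l}" "W i' j' \<noteq> W k l" "i' < j'" "{i', j'} \<in> Edg"
        "?T - {W k l} = {X p, Y q}" "p \<in> {i', j'}" "q \<in> {i', j'}"
      by (rule contributor_shape[OF aS _ T_W dS]) simp
    then have "m \<in> {i', j'}" unfolding T_rest by (auto simp: doubleton_eq_iff)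
    have "{i', j'} \<inter> {k, l} \<noteq> {}"
      using coeff_disjoint_edges[OF S(3) assms(2)] aS S(1) by blast
    then obtain s where s: "s \<in> {i', j'}" "s \<in> {k, l}" by blast
    then have i'j': "{i', j'} = {m, s}" using \<open>m \<in> {i', j'}\<close> m S(3) by auto
    show "S = {W i j, W k l}"
      \<comment> \<open>s = w would close the triangle m, e, w\<close>
    proof (cases "s = e")
      case True
      then have "{i', j'} = {i, j}" using i'j' me by simp
      then show ?thesis using S(1,3) assms(1) by (auto simp: doubleton_eq_iff)
    next
      case False
      then have "{w, m} \<in> Edg" using s(2) w i'j' S(4) by (auto simp: insert_commute)
      then show ?thesis using no_triangle[of m e w] assms(3,4) me w by simp
    qed
  qed
qed

theorem vanishes: "a = zero_el"
proof -
  have "a S = 0" for S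
  proof (rule ccontr)
    assume "a S \<noteq> 0"
    then obtain i j k l where "S = {W i j, W k l}" "W i j \<noteq> W k l"
        "i < j" "k < l" "{i, j} \<in> Edg" "{k, l} \<in> Edg"
      by (rule support_shape)
    then show False
      using coeff_disjoint_edges coeff_adjacent_edges \<open>a S \<noteq> 0\<close> by blast
  qed
  then show ?thesis by (auto simp: zero_el_def)
qed

end
(* Lets the bidegree (1,1) argument treat x and y at once. *)

definition letter :: "bool \<Rightarrow> nat \<Rightarrow> gen" where
  "letter b = (if b then X else Y)"

lemma letter_simps [simp]: "letter True = X" "letter False = Y"
  by (simp_all add: letter_def)

lemma letter_not_W [simp]: "\<not> is_W (letter b k)" "letter b k \<noteq> W i j" "W i j \<noteq> letter b k"
  by (cases b; simp)+

lemma letter_eq_iff [simp]: "letter b k = letter b' k' \<longleftrightarrow> b = b' \<and> k = k'"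
  by (cases b; cases b') simp_all

lemma not_W_letter:
  assumes "\<not> is_W g"
  obtains b k where "g = letter b k"
proof (cases g)
  case (X k)
  then show ?thesis using that[of True k] by simp
next
  case (Y k)
  then show ?thesis using that[of False k] by simp
next
  case (W i j)
  then show ?thesis using assms by simp
qed

lemma letter_pair_eq_XY:
  assumes "{letter b x, letter b' y} = {X p, Y q}"
  shows "b' = (\<not> b) \<and> {x, y} = {p, q}"
  using assms by (cases b; cases b') (auto simp: doubleton_eq_iff)

lemma letter_W_eq_iff:
  "{letter b x, W i j} = {letter b' x', W i' j'} \<longleftrightarrow> b = b' \<and> x = x' \<and> i = i' \<and> j = j'"
  by (auto simp: doubleton_eq_iff)

lemma enc_letter_less_W: "k \<in> {i, j} \<Longrightarrow> enc (letter b k) < enc (W i j)"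
  using le_prod_encode_1[of i j] le_prod_encode_2[of j i] by (cases b) auto

lemma dgen_W_letters_nonzero:
  assumes "i \<noteq> j" "x \<in> {i, j}" "y \<in> {i, j}"
  shows "dgen (W i j) {letter b x, letter (\<not> b) y} \<noteq> 0"
proof (cases b)
  case False
  have "{Y x, X y} = {X y, Y x}" by (rule insert_commute)
  then show ?thesis using False dgen_W_XY_nonzero[OF assms(1,3,2)] by simp
qed (use dgen_W_XY_nonzero[OF assms] in simp)

definition edge_relation :: "bool \<Rightarrow> nat \<Rightarrow> nat \<Rightarrow> ext" where
  "edge_relation b i j = mul (sub (gen_el (letter b i)) (gen_el (letter b j))) (om i j)"

lemma edge_relation_eq:
  assumes "i < j"
  shows "edge_relation b i j = sub (mono {letter b i, W i j}) (mono {letter b j, W i j})"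
proof -
  have "om i j = mono {W i j}" using assms by (simp add: om_def gen_el_def)
  then show ?thesis
    by (simp add: edge_relation_def mul_sub_left mul_gen_el_mono_singleton[OF enc_letter_less_W[of i i j]]
      mul_gen_el_mono_singleton[OF enc_letter_less_W[of j i j]])
qed

lemma edge_relation_in_rel_ideal:
  assumes "i \<in> {1..n}" "j \<in> {1..n}" "i \<noteq> j"
  shows "edge_relation b i j \<in> rel_ideal n"
proof -
  have "mul (sub (xg i) (xg j)) (om i j) \<in> relations n" "mul (sub (yg i) (yg j)) (om i j) \<in> relations n"
    using assms unfolding relations_def by blast+
  then show ?thesis by (cases b) (auto simp: edge_relation_def xg_def yg_def intro: rel_ideal.rel)
qed

definition edge_monomials :: "bool \<Rightarrow> nat \<Rightarrow> nat \<Rightarrow> gen set set" where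
  "edge_monomials b i j = {{letter b i, W i j}, {letter b j, W i j}}"

lemma edge_monomials_unique:
  "T \<in> edge_monomials b i j \<Longrightarrow> T \<in> edge_monomials b' i' j' \<Longrightarrow> b = b' \<and> i = i' \<and> j = j'"
  unfolding edge_monomials_def by (elim insertE emptyE) (auto simp: letter_W_eq_iff)

lemma dmono_letter_W:
  assumes "finite T" "W i j \<notin> T" "letter b k \<in> T" "k \<in> {i, j}"
  shows "dmono {letter b k, W i j} T =
    - ((-1) ^ card {g \<in> T - {letter b k}. enc (letter b k) < enc g} * dgen (W i j) (T - {letter b k}))"
proof -
  have "{g \<in> {W i j, letter b k}. enc g < enc (W i j)} = {letter b k}"
    using enc_letter_less_W[OF assms(4)] by auto
  then show ?thesis
    using dmono_insert_W[of T i j "{letter b k}"] assms(1-3)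
    by (simp add: insert_commute inv_count_singleton_right)
qed

lemma dmono_letter_W_test:
  assumes "i < j"
  shows "dmono {letter b i, W i j} {letter b i, letter b j, letter (\<not> b) j} = -1"
    and "dmono {letter b j, W i j} {letter b i, letter b j, letter (\<not> b) j} = -1"
proof -
  let ?T = "{letter b i, letter b j, letter (\<not> b) j}"
  have i: "?T - {letter b i} = {letter b j, letter (\<not> b) j}"
    and j: "?T - {letter b j} = {letter b i, letter (\<not> b) j}"
    using assms by auto
  have "{g \<in> {letter b j, letter (\<not> b) j}. enc (letter b i) < enc g} = {letter b j, letter (\<not> b) j}"
    using assms by (cases b) auto
  then have "card {g \<in> {letter b j, letter (\<not> b) j}. enc (letter b i) < enc g} = 2"
    by simp
  moreover have "{g \<in> {letter b i, letter (\<not> b) j}. enc (letter b j) < enc g} = (if b then {Y j} else {})"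
    using assms by (cases b) auto
  then have "card {g \<in> {letter b i, letter (\<not> b) j}. enc (letter b j) < enc g} = (if b then 1 else 0)"
    by simp
  moreover have "dgen (W i j) {letter b j, letter (\<not> b) j} = 1"
    using assms by (cases b) (simp_all add: dgen_W_XY insert_commute)
  moreover have "dgen (W i j) {letter b i, letter (\<not> b) j} = (if b then -1 else 1)"
    using assms by (cases b) (simp_all add: dgen_W_XY insert_commute)
  ultimately show "dmono {letter b i, W i j} ?T = -1" "dmono {letter b j, W i j} ?T = -1"
    using dmono_letter_W[of ?T i j b i] dmono_letter_W[of ?T i j b j] unfolding i j
    by (auto split: if_splits)
qed

locale cocycle_11 = E2_cocycle n Edg 1 1 a + triangle_free Edg for n Edg a +
  assumes edges_in_range: "{i, j} \<in> Edg \<Longrightarrow> i \<in> {1..n} \<and> j \<in> {1..n}"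
begin

lemma support_shape:
  assumes "a S \<noteq> 0"
  obtains b k i j where "S = {letter b k, W i j}" "i < j" "{i, j} \<in> Edg"
proof -
  have "finite S" "card {g \<in> S. \<not> is_W g} = 1" "card {g \<in> S. is_W g} = 1"
    using support_bidegree[OF assms] by simp_all
  then obtain h w where XY: "{g \<in> S. \<not> is_W g} = {h}" and W: "{g \<in> S. is_W g} = {w}"
    by (auto simp: card_1_singleton_iff)
  have "S = {g \<in> S. \<not> is_W g} \<union> {g \<in> S. is_W g}" by blast
  then have "S = {h, w}" unfolding XY W by auto
  moreover have "\<not> is_W h" using XY by blast
  then obtain b k where "h = letter b k" by (rule not_W_letter)
  moreover obtain i j where "w = W i j" "i < j" "{i, j} \<in> Edg"
    using support_W[OF assms, of w] W by blast
  ultimately show ?thesis using that by blast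
qed

lemma contributor_shape:
  assumes "a S \<noteq> 0" "finite T" "\<forall>g\<in>T. \<not> is_W g" "dmono S T \<noteq> 0"
  obtains b k i j p q where "S = {letter b k, W i j}" "i < j" "{i, j} \<in> Edg"
    "letter b k \<in> T" "T - {letter b k} = {X p, Y q}" "p \<in> {i, j}" "q \<in> {i, j}"
proof -
  obtain b k i j where S: "S = {letter b k, W i j}" "i < j" "{i, j} \<in> Edg"
    by (rule support_shape[OF assms(1)])
  obtain c d p q where cd: "W c d \<in> S" "S - {W c d} \<subseteq> T" "T - (S - {W c d}) = {X p, Y q}"
      "p \<in> {c, d}" "q \<in> {c, d}"
    by (rule dmono_nonzero[OF assms(2,4)])
  have "W c d = W i j" using cd(1) S(1) by simp
  then have "c = i" "d = j" "S - {W c d} = {letter b k}" using S(1) by auto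
  then show ?thesis using that[OF S] cd by simp
qed

lemma off_edge_test_contributor:
  assumes "i < j" "{i, j} = {u, v}" "{k, u} \<notin> Edg" "k \<notin> {i, j}"
    and "a S \<noteq> 0" "dmono S {letter b v, letter b k, letter (\<not> b) u} \<noteq> 0"
  shows "S = {letter b k, W i j}"
proof -
  let ?T = "{letter b v, letter b k, letter (\<not> b) u}"
  have "u \<in> {i, j}" "v \<in> {i, j}" "u \<noteq> v" using assms(1,2) by (auto simp: doubleton_eq_iff)
  then have neq: "k \<noteq> u" "k \<noteq> v" "u \<noteq> v" using assms(4) by auto
  obtain b' k' c d p q where C: "S = {letter b' k', W c d}" "c < d" "{c, d} \<in> Edg"
      "letter b' k' \<in> ?T" "?T - {letter b' k'} = {X p, Y q}" "p \<in> {c, d}" "q \<in> {c, d}"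
    by (rule contributor_shape[OF assms(5) _ _ assms(6)]) simp_all
  from C(4) consider "letter b' k' = letter b v" | "letter b' k' = letter b k"
    | "letter b' k' = letter (\<not> b) u" by blast
  then show ?thesis
  proof cases
    case 1
    then have "?T - {letter b' k'} = {letter b k, letter (\<not> b) u}" using neq by auto
    then have "{k, u} = {p, q}" using C(5) letter_pair_eq_XY by metis
    then have "k \<in> {c, d}" "u \<in> {c, d}" using C(6,7) by blast+
    then have "{c, d} = {k, u}" using neq(1) by (rule doubleton_eq_if_mem)
    then show ?thesis using C(3) assms(3) by simp
  next
    case 2
    then have "?T - {letter b' k'} = {letter b v, letter (\<not> b) u}" using neq by auto
    then have "{v, u} = {p, q}" using C(5) letter_pair_eq_XY by metis
    then have "v \<in> {c, d}" "u \<in> {c, d}" using C(6,7) by blast+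
    then have "{c, d} = {v, u}" using neq(3)[THEN not_sym] by (rule doubleton_eq_if_mem)
    then have "{c, d} = {i, j}" using assms(2) by (simp add: insert_commute)
    then show ?thesis using C(1,2) assms(1) 2 by (auto simp: doubleton_eq_iff)
  next
    case 3
    then have "?T - {letter b' k'} = {letter b v, letter b k}" using neq by auto
    then show ?thesis using C(5) letter_pair_eq_XY by (metis (full_types))
  qed
qed

lemma coeff_off_edge:
  assumes "i < j" "{i, j} \<in> Edg" "k \<notin> {i, j}"
  shows "a {letter b k, W i j} = 0"
proof -
  obtain u v where uv: "{i, j} = {u, v}" "{k, u} \<notin> Edg"
    by (rule nonadjacent_end[OF assms(2)])
  let ?T = "{letter b v, letter b k, letter (\<not> b) u}"
  show ?thesis
  proof (rule sole_contributor_vanishes[where T = ?T])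
    show "\<not> linked ?T" by (simp add: linked_def)
    have uv_ij: "u \<in> {i, j}" "v \<in> {i, j}" using uv(1) by auto
    then have "k \<noteq> u" "k \<noteq> v" using assms(3) by auto
    then have "?T - {letter b k} = {letter b v, letter (\<not> b) u}" by auto
    then show "dmono {letter b k, W i j} ?T \<noteq> 0"
      using dmono_pair_W_nonzero_iff[of ?T i j "letter b k"] dgen_W_letters_nonzero[OF _ uv_ij(2,1)]
        assms(1) by simp
    show "S = {letter b k, W i j}" if "a S \<noteq> 0" "dmono S ?T \<noteq> 0" for S
      using off_edge_test_contributor[OF assms(1) uv assms(3) that] .
  qed
qed

lemma edge_test_contributor:
  assumes "i < j" "a S \<noteq> 0" "dmono S {letter b i, letter b j, letter (\<not> b) j} \<noteq> 0"
  shows "S \<in> {{letter b i, W i j}, {letter b j, W i j}}"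
proof -
  let ?T = "{letter b i, letter b j, letter (\<not> b) j}"
  obtain b' k' c d p q where C: "S = {letter b' k', W c d}" "c < d" "{c, d} \<in> Edg"
      "letter b' k' \<in> ?T" "?T - {letter b' k'} = {X p, Y q}" "p \<in> {c, d}" "q \<in> {c, d}"
    by (rule contributor_shape[OF assms(2) _ _ assms(3)]) simp_all
  from C(4) consider "letter b' k' = letter b i" | "letter b' k' = letter b j"
    | "letter b' k' = letter (\<not> b) j" by blast
  then show ?thesis
  proof cases
    case 1
    then have "?T - {letter b' k'} = {letter b j, letter (\<not> b) j}" using assms(1) by auto
    then have "{j, j} = {p, q}" using C(5) letter_pair_eq_XY by metis
    then have "j \<in> {c, d}" using C(6) by auto
    moreover have "i \<in> {c, d}"
      using coeff_off_edge[OF C(2,3)] assms(2) C(1) 1 by auto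
    ultimately have "{c, d} = {i, j}" using assms(1) doubleton_eq_if_mem[of i c d j] by simp
    then show ?thesis using C(1,2) assms(1) 1 by (auto simp: doubleton_eq_iff)
  next
    case 2
    then have "?T - {letter b' k'} = {letter b i, letter (\<not> b) j}" using assms(1) by auto
    then have "{i, j} = {p, q}" using C(5) letter_pair_eq_XY by metis
    then have "i \<in> {c, d}" "j \<in> {c, d}" using C(6,7) by blast+
    then have "{c, d} = {i, j}" using assms(1) doubleton_eq_if_mem[of i c d j] by simp
    then show ?thesis using C(1,2) assms(1) 2 by (auto simp: doubleton_eq_iff)
  next
    case 3
    then have "?T - {letter b' k'} = {letter b i, letter b j}" using assms(1) by auto
    then show ?thesis using C(5) letter_pair_eq_XY by (metis (full_types))
  qed
qed

lemma coeff_edge_antisym: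
  assumes "i < j"
  shows "a {letter b j, W i j} = - a {letter b i, W i j}"
proof -
  let ?T = "{letter b i, letter b j, letter (\<not> b) j}"
  let ?Si = "{letter b i, W i j}" and ?Sj = "{letter b j, W i j}"
  have "?Si \<noteq> ?Sj" using assms by (simp add: letter_W_eq_iff)
  then have "d2 a ?T = a ?Si * dmono ?Si ?T + a ?Sj * dmono ?Sj ?T"
    using d2_eq_sum[of "{?Si, ?Sj}" ?T] edge_test_contributor[OF assms] by simp
  moreover have "d2 a ?T = 0" by (rule d2_unlinked) (simp add: linked_def)
  ultimately show ?thesis using dmono_letter_W_test[OF assms] by simp
qed

lemma support_on_edges:
  assumes "a T \<noteq> 0"
  obtains i j b where "i < j" "{i, j} \<in> Edg" "T \<in> edge_monomials b i j"
proof -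
  obtain b k i j where T: "T = {letter b k, W i j}" "i < j" "{i, j} \<in> Edg"
    by (rule support_shape[OF assms])
  then have "k \<in> {i, j}" using coeff_off_edge assms by blast
  then show ?thesis using that[OF T(2,3)] T(1) by (auto simp: edge_monomials_def)
qed

lemma edge_term_apply:
  assumes "i < j"
  shows "smul (a {letter b i, W i j}) (edge_relation b i j) T = (if T \<in> edge_monomials b i j then a T else 0)"
proof -
  have "{letter b i, W i j} \<noteq> {letter b j, W i j}" using assms by (simp add: letter_W_eq_iff)
  then show ?thesis
    using coeff_edge_antisym[OF assms, of b]
    by (auto simp: edge_relation_eq[OF assms] smul_def sub_def mono_def edge_monomials_def)
qed

lemma finite_edge_indices: "finite {(i, j, b :: bool). i < j \<and> {i, j} \<in> Edg}"
proof -
  have "{(i, j, b :: bool). i < j \<and> {i, j} \<in> Edg} \<subseteq> {1..n} \<times> {1..n} \<times> UNIV"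
    using edges_in_range by auto
  then show ?thesis
    by (rule finite_subset) (intro finite_cartesian_product finite_atLeastAtMost finite_UNIV)
qed

lemma sum_edge_terms:
  "(\<Sum>(i, j, b)\<in>{(i, j, b). i < j \<and> {i, j} \<in> Edg}. smul (a {letter b i, W i j}) (edge_relation b i j) T) = a T"
  (is "(\<Sum>(i, j, b)\<in>?I. _) = _")
proof -
  let ?P = "\<lambda>(i, j, b). T \<in> edge_monomials b i j"
  have "(case x of (i, j, b) \<Rightarrow> smul (a {letter b i, W i j}) (edge_relation b i j) T) =
      (if ?P x then a T else 0)" if "x \<in> ?I" for x
  proof -
    obtain i j b where "x = (i, j, b)" by (rule prod_cases3)
    then show ?thesis using that edge_term_apply by simp
  qed
  then have "(\<Sum>(i, j, b)\<in>?I. smul (a {letter b i, W i j}) (edge_relation b i j) T) =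
      (\<Sum>x\<in>?I. if ?P x then a T else 0)"
    by (rule sum.cong[OF refl])
  also have "\<dots> = a T"
  proof (rule sum_if_unique[OF finite_edge_indices])
    show "x = y" if P: "?P x" "?P y" for x y
    proof -
      obtain i j b i' j' b' where "x = (i, j, b)" "y = (i', j', b')" by (metis prod_cases3)
      then show ?thesis using P edge_monomials_unique by simp
    qed
    show "\<exists>x\<in>?I. ?P x" if aT: "a T \<noteq> 0"
    proof -
      obtain i j b where "i < j" "{i, j} \<in> Edg" "T \<in> edge_monomials b i j"
        by (rule support_on_edges[OF aT])
      then show ?thesis by (intro bexI[of _ "(i, j, b)"]) auto
    qed
  qed
  finally show ?thesis .
qed

theorem in_rel_ideal: "a \<in> rel_ideal n"
proof -
  have "(\<lambda>T. \<Sum>(i, j, b)\<in>{(i, j, b). i < j \<and> {i, j} \<in> Edg}.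
      smul (a {letter b i, W i j}) (edge_relation b i j) T) \<in> rel_ideal n"
    using finite_edge_indices edges_in_range
    by (intro rel_ideal_sum) (auto intro!: rel_ideal.smul edge_relation_in_rel_ideal)
  then show ?thesis by (simp add: sum_edge_terms)
qed

end

lemma E3_vanishes_01: "E3_vanishes n Edg 0 1"
proof (rule E3_vanishesI)
  fix a
  assume "a \<in> subalg (gens_G n Edg)" "homog 0 1 a" "d2 a \<in> rel_ideal n"
  then interpret cocycle_01 n Edg a by unfold_locales
  show "a \<in> rel_ideal n" using vanishes rel_ideal.zero by simp
qed

lemma (in triangle_free) E3_vanishes_02: "E3_vanishes n Edg 0 2"
proof (rule E3_vanishesI)
  fix a
  assume "a \<in> subalg (gens_G n Edg)" "homog 0 2 a" "d2 a \<in> rel_ideal n"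
  then interpret cocycle_02 n Edg a by unfold_locales
  show "a \<in> rel_ideal n" using vanishes rel_ideal.zero by simp
qed

lemma (in triangle_free) E3_vanishes_11:
  assumes "\<And>i j. {i, j} \<in> Edg \<Longrightarrow> i \<in> {1..n} \<and> j \<in> {1..n}"
  shows "E3_vanishes n Edg 1 1"
proof (rule E3_vanishesI)
  fix a
  assume "a \<in> subalg (gens_G n Edg)" "homog 1 1 a" "d2 a \<in> rel_ideal n"
  then interpret cocycle_11 n Edg a using assms by unfold_locales
  show "a \<in> rel_ideal n" by (rule in_rel_ideal)
qed

theorem lemma4p4:
  fixes n :: nat and Edg :: "nat set set"
  assumes "\<forall>e\<in>Edg. \<exists>i j. e = {i, j} \<and> i \<noteq> j \<and> i \<in> {1..n} \<and> j \<in> {1..n}"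
    and "\<not> (\<exists>i j k. {i, j} \<in> Edg \<and> {j, k} \<in> Edg \<and> {k, i} \<in> Edg)"
  shows "E3_vanishes n Edg 0 1 \<and> E3_vanishes n Edg 0 2 \<and> E3_vanishes n Edg 1 1"
proof -
  interpret triangle_free Edg using assms(2) by unfold_locales blast
  have "i \<in> {1..n} \<and> j \<in> {1..n}" if "{i, j} \<in> Edg" for i j
    using assms(1) that by (fastforce simp: doubleton_eq_iff)
  then show ?thesis using E3_vanishes_01 E3_vanishes_02 E3_vanishes_11 by blast
qed

end
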